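(* Let $R$ be a finite commutative local ring and $G=\mathrm{GL}_n(R)$. For each $w\in W$, the map \[ \phi_w: e_{U^w}e_{V^w}\mathbb{C}[G]\to e_Ve_U\mathbb{C}[G],\qquad x\mapsto e_Vx, \] is a well-defined isomorphism of $\mathbb{C}[L]$-$\mathbb{C}[G]$ bimodules, where $U^w=w^{-1}Uw$, $V^w=w^{-1}Vw$.
   Context: $L$ is the subgroup of diagonal matrices, $U$ (resp. $V$) the subgroup of upper (resp. lower) unitriangular matrices, and $W$ the group of permutation matrices in $G$. For a subgroup $H\subseteq G$, $e_H=|H|^{-1}\sum_{h\in H}h\in\mathbb{C}[G]$. Since $L$ normalises $U,V,U^w,V^w$, the corresponding idempotents commute with $\mathbb{C}[L]$, so both spaces are $\mathbb{C}[L]$-$\mathbb{C}[G]$ bimodules under left and right multiplication. *)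

theory Defs
  imports Complex_Main "Jordan_Normal_Form.Matrix" "HOL-Combinatorics.Permutations"
begin

definition local_ring :: "'r::comm_ring_1 itself \<Rightarrow> bool" where
  "local_ring TYPE('r) \<longleftrightarrow> (0::'r) \<noteq> 1 \<and>
     (\<forall>a b :: 'r. \<not> a dvd 1 \<and> \<not> b dvd 1 \<longrightarrow> \<not> (a + b) dvd 1)"

definition GL :: "nat \<Rightarrow> 'r::comm_ring_1 mat set" where
  "GL n = {A \<in> carrier_mat n n. invertible_mat A}"

definition minv :: "'r::comm_ring_1 mat \<Rightarrow> 'r mat" where
  "minv A = (SOME B. inverts_mat A B \<and> inverts_mat B A)"

definition diag_grp :: "nat \<Rightarrow> 'r::comm_ring_1 mat set" where
  "diag_grp n = {A \<in> GL n. \<forall>i<n. \<forall>j<n. i \<noteq> j \<longrightarrow> A $$ (i,j) = 0}"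

definition upper_uni :: "nat \<Rightarrow> 'r::comm_ring_1 mat set" where
  "upper_uni n = {A \<in> GL n. (\<forall>i<n. A $$ (i,i) = 1) \<and> (\<forall>i<n. \<forall>j<n. j < i \<longrightarrow> A $$ (i,j) = 0)}"

definition lower_uni :: "nat \<Rightarrow> 'r::comm_ring_1 mat set" where
  "lower_uni n = {A \<in> GL n. (\<forall>i<n. A $$ (i,i) = 1) \<and> (\<forall>i<n. \<forall>j<n. i < j \<longrightarrow> A $$ (i,j) = 0)}"

definition perm_mats :: "nat \<Rightarrow> 'r::comm_ring_1 mat set" where
  "perm_mats n = {mat n n (\<lambda>(i,j). if i = \<sigma> j then 1 else 0) | \<sigma>. \<sigma> permutes {..<n}}"

definition conj_grp :: "'r::comm_ring_1 mat \<Rightarrow> 'r mat set \<Rightarrow> 'r mat set" where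
  "conj_grp w H = {minv w * h * w | h. h \<in> H}"

text \<open>The group algebra C[G]: complex-valued functions on G (extended by 0 outside G),
  with convolution product.\<close>
definition group_alg :: "'g set \<Rightarrow> ('g \<Rightarrow> complex) set" where
  "group_alg G = {f. \<forall>x. x \<notin> G \<longrightarrow> f x = 0}"

definition conv :: "'g::times set \<Rightarrow> ('g \<Rightarrow> complex) \<Rightarrow> ('g \<Rightarrow> complex) \<Rightarrow> 'g \<Rightarrow> complex" where
  "conv G f g = (\<lambda>x. \<Sum>y\<in>G. \<Sum>z\<in>G. if y * z = x then f y * g z else 0)"

text \<open>The idempotent e_H = |H|^{-1} \<Sum>_{h\<in>H} h\<close>
definition idem :: "'g set \<Rightarrow> 'g \<Rightarrow> complex" where
  "idem H = (\<lambda>x. if x \<in> H then 1 / of_nat (card H) else 0)"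

end

theory Submission
  imports Defs "HOL-Library.Function_Algebras" "Jordan_Normal_Form.Determinant"
begin

text \<open>
  Write e_H for the normalised idempotent of a subgroup H. Each of the pattern groups U, V, U^w, V^w
  is the product of its intersections with the other pair, e.g. U^w = (U^w \<inter> V)(U^w \<inter> U), and
  the idempotents factor accordingly. Hence e_V e_{U^w} e_{V^w} = e_V e_U e_{V^w \<inter> V}, so
  x \<mapsto> e_V x maps e_{U^w} e_{V^w} C[G] into e_V e_U C[G]. Every e_H is self-adjoint for the
  standard inner product on C[G], so x = e_H e_K a vanishes as soon as e_K x = 0; combined with the
  factorisations this makes both x \<mapsto> e_V x and y \<mapsto> e_{U^w} e_{V^w} y injective on the two right
  ideals, which therefore have the same dimension. Diagonal matrices normalise all pattern groups,
  which gives the equivariance.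
\<close>

section \<open>Linear algebra and finite groups\<close>

lemma (in vector_space) image_eq_if_injective_linear_maps:
  assumes F: "finite F" "S \<subseteq> span F" "T \<subseteq> span F"
    and S: "subspace S" and T: "subspace T"
    and f: "Vector_Spaces.linear scale scale f" "inj_on f S" "f ` S \<subseteq> T"
    and g: "Vector_Spaces.linear scale scale g" "inj_on g T" "g ` T \<subseteq> S"
  shows "f ` S = T"
proof -
  interpret f: Vector_Spaces.linear scale scale f by (fact f(1))
  interpret g: Vector_Spaces.linear scale scale g by (fact g(1))
  obtain B where B: "B \<subseteq> S" "independent B" "S \<subseteq> span B"
    using maximal_independent_subset[of S] by blast
  obtain C where C: "C \<subseteq> T" "independent C" "T \<subseteq> span C"
    using maximal_independent_subset[of T] by blast
  have span_B: "span B = S"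
    using span_minimal[OF B(1) S] B(3) by (rule subset_antisym)
  have span_C: "span C = T"
    using span_minimal[OF C(1) T] C(3) by (rule subset_antisym)
  have "finite B"
    using independent_span_bound[OF F(1) B(2)] B(1) F(2) by blast
  have "finite C"
    using independent_span_bound[OF F(1) C(2)] C(1) F(3) by blast
  have indep_gC: "independent (g ` C)"
    using g.independent_injective_image[OF C(2)] g(2) span_C by simp
  have "card C = card (g ` C)"
    using card_image[OF inj_on_subset[OF g(2) C(1)]] by simp
  also have "\<dots> \<le> card B"
    using independent_span_bound[OF \<open>finite B\<close> indep_gC] C(1) g(3) B(3) by blast
  finally have "card C \<le> card B" .
  have indep_fB: "independent (f ` B)"
    using f.independent_injective_image[OF B(2)] f(2) span_B by simp
  have card_fB: "card (f ` B) = card B"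
    using card_image[OF inj_on_subset[OF f(2) B(1)]] .
  have "T \<subseteq> span (f ` B)"
  proof
    fix t assume "t \<in> T"
    show "t \<in> span (f ` B)"
    proof (rule ccontr)
      assume t: "t \<notin> span (f ` B)"
      have "insert t (f ` B) \<subseteq> span C"
        using \<open>t \<in> T\<close> f(3) B(1) C(3) by blast
      then have "card (insert t (f ` B)) \<le> card C"
        using independent_span_bound[OF \<open>finite C\<close> independent_insertI[OF t indep_fB]] by blast
      moreover have "t \<notin> f ` B"
        using t span_base by blast
      ultimately show False
        using card_fB \<open>card C \<le> card B\<close> \<open>finite B\<close> by simp
    qed
  qed
  then show ?thesis
    using f.span_image span_B f(3) by auto
qed

lemma sum_fun_apply: "sum f A x = (\<Sum>a\<in>A. f a x)"
  by (induct A rule: infinite_finite_induct) simp_all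

lemma vector_space_pointwise_scale: "vector_space (\<lambda>(c::'a::field) f (x::'b). c * f x)"
  by unfold_locales (simp_all add: fun_eq_iff algebra_simps)

lemma (in Group.group) finite_subgroupI:
  assumes "finite H" "H \<subseteq> carrier G" "\<one> \<in> H" "\<And>x y. x \<in> H \<Longrightarrow> y \<in> H \<Longrightarrow> x \<otimes> y \<in> H"
  shows "subgroup H G"
proof (rule subgroupI)
  fix x assume x: "x \<in> H"
  have "(\<lambda>y. x \<otimes> y) ` H = H"
    using assms x by (intro endo_inj_surj) (auto intro!: inj_onI simp: subset_iff)
  then obtain y where y: "y \<in> H" "x \<otimes> y = \<one>"
    using assms(3) by (metis imageE)
  then have "inv x = y"
    using assms(2) x by (metis inv_comm inv_equality subsetD)
  with y show "inv x \<in> H" by simp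
qed (use assms in auto)

lemma (in Group.group) inv_mult_cancel_left [simp]:
  "x \<in> carrier G \<Longrightarrow> y \<in> carrier G \<Longrightarrow> inv x \<otimes> (x \<otimes> y) = y"
  by (simp add: m_assoc[symmetric])

lemma (in Group.group) mult_inv_cancel_left [simp]:
  "x \<in> carrier G \<Longrightarrow> y \<in> carrier G \<Longrightarrow> x \<otimes> (inv x \<otimes> y) = y"
  by (simp add: m_assoc[symmetric])

lemma (in Group.group) factorisation_unique:
  assumes H: "subgroup H G" and K: "subgroup K G" and HK: "H \<inter> K = {\<one>}"
    and hk: "h \<in> H" "h' \<in> H" "k \<in> K" "k' \<in> K" and eq: "h \<otimes> k = h' \<otimes> k'"
  shows "h = h'" and "k = k'"
proof -
  have carr: "h \<in> carrier G" "h' \<in> carrier G" "k \<in> carrier G" "k' \<in> carrier G"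
    using subgroup.mem_carrier[OF H hk(1)] subgroup.mem_carrier[OF H hk(2)]
      subgroup.mem_carrier[OF K hk(3)] subgroup.mem_carrier[OF K hk(4)] .
  have "inv h' \<otimes> h = inv h' \<otimes> (h \<otimes> k) \<otimes> inv k"
    using carr by (simp add: m_assoc)
  also have "\<dots> = k' \<otimes> inv k"
    using carr eq by simp
  finally have in_both: "inv h' \<otimes> h = k' \<otimes> inv k" .
  have "inv h' \<otimes> h \<in> H" "k' \<otimes> inv k \<in> K"
    using hk H K by (simp_all add: subgroup.m_closed subgroup.m_inv_closed)
  then have "inv h' \<otimes> h \<in> H \<inter> K" by (simp add: in_both)
  then have "inv h' \<otimes> h = \<one>" by (simp add: HK)
  then have "h' \<otimes> (inv h' \<otimes> h) = h'" using carr by simp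
  then show "h = h'" using carr by simp
  have "k = inv h \<otimes> (h \<otimes> k)" using carr by simp
  also have "\<dots> = k'" using carr by (simp add: eq \<open>h = h'\<close>[symmetric])
  finally show "k = k'" .
qed

lemma (in Group.group) mult_image_eq_if_card:
  assumes H: "subgroup H G" and K: "subgroup K G" and X: "subgroup X G" "finite X"
    and HX: "H \<subseteq> X" and KX: "K \<subseteq> X" and HK: "H \<inter> K = {\<one>}"
    and card_X: "card X = card H * card K"
  shows "(\<lambda>(h, k). h \<otimes> k) ` (H \<times> K) = X"
proof (rule card_subset_eq[OF X(2)])
  let ?m = "\<lambda>(h, k). h \<otimes> k"
  show "?m ` (H \<times> K) \<subseteq> X"
  proof clarify
    fix h k assume "h \<in> H" "k \<in> K"
    then show "h \<otimes> k \<in> X" using HX KX subgroup.m_closed[OF X(1)] by blast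
  qed
  have "inj_on ?m (H \<times> K)"
  proof (rule inj_onI, clarify)
    fix h k h' k' assume "h \<in> H" "k \<in> K" "h' \<in> H" "k' \<in> K" "h \<otimes> k = h' \<otimes> k'"
    from factorisation_unique[OF H K HK this(1,3,2,4,5)] show "h = h' \<and> k = k'" ..
  qed
  then show "card (?m ` (H \<times> K)) = card X"
    by (simp add: card_image card_X card_cartesian_product)
qed

section \<open>Convolution and idempotents in a finite group algebra\<close>

text \<open>The product of G must be the type-class product, since conv is defined with the latter.\<close>
locale finite_group_algebra = Group.group G for G :: "'g::times monoid" (structure) +
  assumes finite_carrier: "finite (carrier G)"
    and mult_eq_times: "mult G = (*)"
begin

abbreviation conv_G :: "('g \<Rightarrow> complex) \<Rightarrow> ('g \<Rightarrow> complex) \<Rightarrow> 'g \<Rightarrow> complex" (infixl \<open>\<star>\<close> 70)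
  where "f \<star> g \<equiv> conv (carrier G) f g"

lemma conv_apply:
  assumes "x \<in> carrier G"
  shows "(f \<star> g) x = (\<Sum>y\<in>carrier G. f y * g (inv y \<otimes> x))"
  unfolding conv_def
proof (rule sum.cong[OF refl])
  fix y assume y: "y \<in> carrier G"
  have "(\<Sum>z\<in>carrier G. if y * z = x then f y * g z else 0)
      = (\<Sum>z\<in>carrier G. if z = inv y \<otimes> x then f y * g z else 0)"
    using y assms by (intro sum.cong) (auto simp: mult_eq_times[symmetric] inv_solve_left)
  then show "(\<Sum>z\<in>carrier G. if y * z = x then f y * g z else 0) = f y * g (inv y \<otimes> x)"
    using y assms finite_carrier by simp
qed

lemma conv_apply_right:
  assumes x: "x \<in> carrier G"
  shows "(f \<star> g) x = (\<Sum>z\<in>carrier G. f (x \<otimes> inv z) * g z)"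
proof -
  have "bij_betw (\<lambda>z. x \<otimes> inv z) (carrier G) (carrier G)"
    using x by (intro bij_betw_byWitness[where f' = "\<lambda>y. inv y \<otimes> x"])
      (auto simp: m_assoc inv_mult_group)
  then show ?thesis
    unfolding conv_apply[OF x] using x
    by (subst sum.reindex_bij_betw[symmetric]) (auto simp: inv_mult_group m_assoc)
qed

lemma conv_outside: "x \<notin> carrier G \<Longrightarrow> (f \<star> g) x = 0"
  unfolding conv_def by (auto intro!: sum.neutral simp: mult_eq_times[symmetric])

lemma conv_in_group_alg: "f \<star> g \<in> group_alg (carrier G)"
  unfolding group_alg_def using conv_outside by blast

lemma conv_assoc: "f \<star> g \<star> h = f \<star> (g \<star> h)"
proof
  fix x show "(f \<star> g \<star> h) x = (f \<star> (g \<star> h)) x"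
  proof (cases "x \<in> carrier G")
    case False then show ?thesis by (simp add: conv_outside)
  next
    case x: True
    have "(f \<star> g \<star> h) x = (\<Sum>y\<in>carrier G. \<Sum>a\<in>carrier G. f a * g (inv a \<otimes> y) * h (inv y \<otimes> x))"
      using x by (simp add: conv_apply sum_distrib_right)
    also have "\<dots> = (\<Sum>a\<in>carrier G. \<Sum>y\<in>carrier G. f a * g (inv a \<otimes> y) * h (inv y \<otimes> x))"
      by (rule sum.swap)
    also have "\<dots> = (\<Sum>a\<in>carrier G. \<Sum>t\<in>carrier G. f a * g t * h (inv t \<otimes> (inv a \<otimes> x)))"
    proof (rule sum.cong[OF refl])
      fix a assume a: "a \<in> carrier G"
      have "bij_betw (\<lambda>t. a \<otimes> t) (carrier G) (carrier G)"
        using a by (intro bij_betw_byWitness[where f' = "\<lambda>y. inv a \<otimes> y"]) (auto simp: m_assoc[symmetric])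
      then show "(\<Sum>y\<in>carrier G. f a * g (inv a \<otimes> y) * h (inv y \<otimes> x))
          = (\<Sum>t\<in>carrier G. f a * g t * h (inv t \<otimes> (inv a \<otimes> x)))"
        using a x by (subst sum.reindex_bij_betw[symmetric])
          (auto simp: m_assoc[symmetric] inv_mult_group intro!: sum.cong)
    qed
    also have "\<dots> = (f \<star> (g \<star> h)) x"
      using x by (simp add: conv_apply sum_distrib_left mult.assoc)
    finally show ?thesis .
  qed
qed

lemma conv_conv_eq: "A \<star> B = C \<Longrightarrow> A \<star> (B \<star> f) = C \<star> f"
  by (simp add: conv_assoc[symmetric])

lemma conv_add_right: "f \<star> (\<lambda>x. g x + h x) = (\<lambda>x. (f \<star> g) x + (f \<star> h) x)"
  unfolding conv_def by (auto simp: fun_eq_iff distrib_left sum.distrib[symmetric] intro!: sum.cong)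

lemma conv_scale_right: "f \<star> (\<lambda>x. c * g x) = (\<lambda>x. c * (f \<star> g) x)"
  unfolding conv_def by (simp add: sum_distrib_left if_distrib mult_ac cong: if_cong)

lemma conv_zero_right: "f \<star> (\<lambda>_. 0) = (\<lambda>_. 0)"
  using conv_scale_right[of f 0 "\<lambda>_. 0"] by simp

lemma sum_carrier_mult_left:
  assumes "a \<in> carrier G"
  shows "(\<Sum>x\<in>carrier G. F (a \<otimes> x)) = (\<Sum>x\<in>carrier G. F x)"
proof -
  have "bij_betw (\<lambda>x. a \<otimes> x) (carrier G) (carrier G)"
    using assms by (intro bij_betw_byWitness[where f' = "\<lambda>y. inv a \<otimes> y"]) auto
  then show ?thesis by (rule sum.reindex_bij_betw)
qed

lemma sum_carrier_inv: "(\<Sum>x\<in>carrier G. F (inv x)) = (\<Sum>x\<in>carrier G. F x)"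
proof -
  have "bij_betw (m_inv G) (carrier G) (carrier G)"
    by (intro bij_betw_byWitness[where f' = "m_inv G"]) auto
  then show ?thesis by (rule sum.reindex_bij_betw)
qed

lemma idem_mult_right:
  assumes H: "subgroup H G" and x: "x \<in> carrier G" and h: "h \<in> H"
  shows "idem H (x \<otimes> h) = idem H x"
proof -
  have hG: "h \<in> carrier G" using subgroup.mem_carrier[OF H h] .
  have "x \<otimes> h \<in> H \<longleftrightarrow> x \<in> H"
  proof
    assume "x \<otimes> h \<in> H"
    then have "x \<otimes> h \<otimes> inv h \<in> H"
      using H h by (simp add: subgroup.m_closed subgroup.m_inv_closed)
    then show "x \<in> H" using x hG by (simp add: m_assoc)
  qed (use H h in \<open>simp add: subgroup.m_closed\<close>)
  then show ?thesis unfolding idem_def by simp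
qed

lemma idem_mult_left:
  assumes H: "subgroup H G" and x: "x \<in> carrier G" and h: "h \<in> H"
  shows "idem H (h \<otimes> x) = idem H x"
proof -
  have hG: "h \<in> carrier G" using subgroup.mem_carrier[OF H h] .
  have "h \<otimes> x \<in> H \<longleftrightarrow> x \<in> H"
  proof
    assume "h \<otimes> x \<in> H"
    then have "inv h \<otimes> (h \<otimes> x) \<in> H"
      using H h by (simp add: subgroup.m_closed subgroup.m_inv_closed)
    then show "x \<in> H" using x hG by simp
  qed (use H h in \<open>simp add: subgroup.m_closed\<close>)
  then show ?thesis unfolding idem_def by simp
qed

lemma idem_inv:
  assumes "subgroup H G" "x \<in> carrier G"
  shows "idem H (inv x) = idem H x"
  using assms unfolding idem_def by (metis inv_inv subgroup.m_inv_closed)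

lemma sum_idem:
  assumes "subgroup K G"
  shows "(\<Sum>z\<in>carrier G. idem K z * F z) = (\<Sum>z\<in>K. F z) / card K"
proof -
  have "(\<Sum>z\<in>carrier G. idem K z * F z) = (\<Sum>z\<in>K. idem K z * F z)"
    using assms finite_carrier subgroup.subset
    by (intro sum.mono_neutral_right) (auto simp: idem_def)
  then show ?thesis by (simp add: idem_def sum_divide_distrib)
qed

lemma conv_idem_apply:
  assumes "subgroup K G" "x \<in> carrier G"
  shows "(f \<star> idem K) x = (\<Sum>z\<in>K. f (x \<otimes> inv z)) / card K"
  using sum_idem[OF assms(1), of "\<lambda>z. f (x \<otimes> inv z)"]
  by (simp add: conv_apply_right[OF assms(2)] mult.commute)

lemma idem_conv_apply:
  assumes "subgroup K G" "x \<in> carrier G"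
  shows "(idem K \<star> f) x = (\<Sum>z\<in>K. f (inv z \<otimes> x)) / card K"
  using sum_idem[OF assms(1), of "\<lambda>z. f (inv z \<otimes> x)"] by (simp add: conv_apply[OF assms(2)])

lemma conv_idem_eq_if_invariant:
  assumes K: "subgroup K G" and f: "f \<in> group_alg (carrier G)"
    and inv: "\<And>x k. x \<in> carrier G \<Longrightarrow> k \<in> K \<Longrightarrow> f (x \<otimes> k) = f x"
  shows "f \<star> idem K = f"
proof
  fix x show "(f \<star> idem K) x = f x"
  proof (cases "x \<in> carrier G")
    case True
    then have "(\<Sum>z\<in>K. f (x \<otimes> inv z)) = (\<Sum>z\<in>K. f x)"
      using K by (intro sum.cong) (auto intro: inv subgroup.m_inv_closed)
    then show ?thesis
      using True K finite_carrier subgroup.finite_imp_card_positive[OF K]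
      by (simp add: conv_idem_apply)
  qed (use f in \<open>simp add: conv_outside group_alg_def\<close>)
qed

lemma idem_conv_eq_if_invariant:
  assumes K: "subgroup K G" and f: "f \<in> group_alg (carrier G)"
    and inv: "\<And>x k. x \<in> carrier G \<Longrightarrow> k \<in> K \<Longrightarrow> f (k \<otimes> x) = f x"
  shows "idem K \<star> f = f"
proof
  fix x show "(idem K \<star> f) x = f x"
  proof (cases "x \<in> carrier G")
    case True
    then have "(\<Sum>z\<in>K. f (inv z \<otimes> x)) = (\<Sum>z\<in>K. f x)"
      using K by (intro sum.cong) (auto intro: inv subgroup.m_inv_closed)
    then show ?thesis
      using True K finite_carrier subgroup.finite_imp_card_positive[OF K]
      by (simp add: idem_conv_apply)
  qed (use f in \<open>simp add: conv_outside group_alg_def\<close>)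
qed

lemma idem_in_group_alg:
  assumes "subgroup H G"
  shows "idem H \<in> group_alg (carrier G)"
  using subgroup.subset[OF assms] unfolding group_alg_def idem_def by auto

lemma idem_conv_idem_absorb:
  assumes H: "subgroup H G" and K: "subgroup K G" and KH: "K \<subseteq> H"
  shows "idem H \<star> idem K = idem H" and "idem K \<star> idem H = idem H"
  using KH by (auto intro!: conv_idem_eq_if_invariant idem_conv_eq_if_invariant
      idem_mult_right[OF H] idem_mult_left[OF H] idem_in_group_alg[OF H] K)

lemma idem_absorb_inner:
  "subgroup H G \<Longrightarrow> subgroup K G \<Longrightarrow> K \<subseteq> H \<Longrightarrow> idem H \<star> (idem K \<star> f) = idem H \<star> f"
  by (metis conv_assoc idem_conv_idem_absorb(1))

lemma idem_absorb_outer: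
  "subgroup H G \<Longrightarrow> subgroup K G \<Longrightarrow> K \<subseteq> H \<Longrightarrow> idem K \<star> (idem H \<star> f) = idem H \<star> f"
  by (metis conv_assoc idem_conv_idem_absorb(2))

lemma idem_conv_idem_apply:
  assumes H: "subgroup H G" and K: "subgroup K G" and x: "x \<in> carrier G"
  shows "(idem H \<star> idem K) x = of_nat (card {h \<in> H. inv h \<otimes> x \<in> K}) / of_nat (card H * card K)"
proof -
  have "finite H" using H finite_carrier subgroup.subset finite_subset by blast
  then have "(\<Sum>h\<in>H. idem K (inv h \<otimes> x)) = of_nat (card {h \<in> H. inv h \<otimes> x \<in> K}) / of_nat (card K)"
    by (simp add: idem_def sum.If_cases Int_def)
  then show ?thesis by (simp add: idem_conv_apply[OF H x])
qed

lemma idem_conv_idem_product: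
  assumes H: "subgroup H G" and K: "subgroup K G" and HK: "H \<inter> K = {\<one>}"
    and X: "(\<lambda>(h, k). h \<otimes> k) ` (H \<times> K) = X" and card_X: "card X = card H * card K"
  shows "idem H \<star> idem K = idem X"
proof
  have HG: "H \<subseteq> carrier G" and KG: "K \<subseteq> carrier G"
    using H K subgroup.subset by blast+
  fix x show "(idem H \<star> idem K) x = idem X x"
  proof (cases "x \<in> carrier G")
    case False
    moreover have "X \<subseteq> carrier G" using X HG KG by auto
    ultimately show ?thesis by (auto simp: conv_outside idem_def)
  next
    case x: True
    show ?thesis
    proof (cases "x \<in> X")
      case True
      then obtain h0 k0 where hk0: "h0 \<in> H" "k0 \<in> K" "x = h0 \<otimes> k0"
        using X by auto
      have single: "{h \<in> H. inv h \<otimes> x \<in> K} = {h0}"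
      proof safe
        fix h assume h: "h \<in> H" "inv h \<otimes> x \<in> K"
        have "h \<otimes> (inv h \<otimes> x) = h0 \<otimes> k0"
          using h(1) HG x hk0(3) by auto
        then show "h = h0" using factorisation_unique(1)[OF H K HK h(1) hk0(1) h(2) hk0(2)] by blast
      next
        show "inv h0 \<otimes> x \<in> K"
          using hk0 subsetD[OF HG hk0(1)] subsetD[OF KG hk0(2)] by simp
      qed (use hk0 in blast)
      then show ?thesis using True card_X unfolding idem_conv_idem_apply[OF H K x] single by (simp add: idem_def)
    next
      case False
      have none: "{h \<in> H. inv h \<otimes> x \<in> K} = {}"
      proof safe
        fix h assume "h \<in> H" "inv h \<otimes> x \<in> K"
        then have "h \<otimes> (inv h \<otimes> x) \<in> X" using X by blast
        moreover have "h \<otimes> (inv h \<otimes> x) = x" using \<open>h \<in> H\<close> HG x by auto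
        ultimately show "h \<in> {}" using False by simp
      qed
      then show ?thesis using False unfolding idem_conv_idem_apply[OF H K x] none by (simp add: idem_def)
    qed
  qed
qed

definition alg_inner :: "('g \<Rightarrow> complex) \<Rightarrow> ('g \<Rightarrow> complex) \<Rightarrow> complex" where
  "alg_inner f g = (\<Sum>x\<in>carrier G. f x * cnj (g x))"

lemma alg_inner_idem_conv:
  assumes H: "subgroup H G"
  shows "alg_inner (idem H \<star> f) g = alg_inner f (idem H \<star> g)"
proof -
  have real_idem: "cnj (idem H y) = idem H y" for y by (simp add: idem_def)
  have "alg_inner (idem H \<star> f) g
      = (\<Sum>y\<in>carrier G. \<Sum>x\<in>carrier G. idem H y * f (inv y \<otimes> x) * cnj (g x))"
    unfolding alg_inner_def
    by (simp add: conv_apply sum_distrib_right cong: sum.cong) (rule sum.swap)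
  also have "\<dots> = (\<Sum>y\<in>carrier G. \<Sum>x\<in>carrier G. idem H y * f x * cnj (g (y \<otimes> x)))"
  proof (rule sum.cong[OF refl])
    fix y assume "y \<in> carrier G"
    then show "(\<Sum>x\<in>carrier G. idem H y * f (inv y \<otimes> x) * cnj (g x))
        = (\<Sum>x\<in>carrier G. idem H y * f x * cnj (g (y \<otimes> x)))"
      using sum_carrier_mult_left[of y "\<lambda>x. idem H y * f (inv y \<otimes> x) * cnj (g x)"]
      by (simp cong: sum.cong)
  qed
  also have "\<dots> = (\<Sum>y\<in>carrier G. \<Sum>x\<in>carrier G. idem H (inv y) * f x * cnj (g (inv y \<otimes> x)))"
    by (rule sum_carrier_inv[symmetric])
  also have "\<dots> = alg_inner f (idem H \<star> g)"
    unfolding alg_inner_def using H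
    by (simp add: conv_apply idem_inv real_idem sum_distrib_left mult_ac cong: sum.cong) (rule sum.swap)
  finally show ?thesis .
qed

lemma alg_inner_self_eq_0:
  assumes f: "f \<in> group_alg (carrier G)" and "alg_inner f f = 0"
  shows "f = (\<lambda>_. 0)"
proof -
  have "alg_inner f f = of_real (\<Sum>x\<in>carrier G. (cmod (f x))\<^sup>2)"
    unfolding alg_inner_def of_real_sum by (rule sum.cong[OF refl]) (rule complex_norm_square[symmetric])
  then have "(\<Sum>x\<in>carrier G. (cmod (f x))\<^sup>2) = 0"
    using assms(2) by (metis of_real_eq_0_iff)
  then have "\<forall>x\<in>carrier G. (cmod (f x))\<^sup>2 = 0"
    using finite_carrier by (simp add: sum_nonneg_eq_0_iff)
  then show ?thesis using f by (auto simp: group_alg_def)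
qed

text \<open>With x = e_H e_K a and e_K x = 0 one gets <x, x> = <e_K a, e_H x> = <e_K a, x> = <a, e_K x> = 0,
  since idempotents of subgroups are self-adjoint.\<close>
lemma idem_conv_kernel:
  assumes H: "subgroup H G" and K: "subgroup K G"
    and zero: "idem K \<star> (idem H \<star> (idem K \<star> a)) = (\<lambda>_. 0)"
  shows "idem H \<star> (idem K \<star> a) = (\<lambda>_. 0)"
proof (rule alg_inner_self_eq_0[OF conv_in_group_alg])
  let ?x = "idem H \<star> (idem K \<star> a)"
  have "idem H \<star> ?x = ?x"
    by (simp add: conv_assoc[symmetric] idem_conv_idem_absorb[OF H H])
  then have "alg_inner ?x ?x = alg_inner (idem K \<star> a) ?x"
    by (metis alg_inner_idem_conv[OF H])
  also have "\<dots> = alg_inner a (idem K \<star> ?x)"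
    by (rule alg_inner_idem_conv[OF K])
  finally show "alg_inner ?x ?x = 0"
    by (simp add: zero alg_inner_def)
qed

lemma conv_idem_commute:
  assumes L: "subgroup L G" and H: "subgroup H G" and l: "l \<in> group_alg L"
    and normal: "\<And>d h. d \<in> L \<Longrightarrow> h \<in> H \<Longrightarrow> d \<otimes> h \<otimes> inv d \<in> H"
  shows "l \<star> idem H = idem H \<star> l"
proof
  fix x show "(l \<star> idem H) x = (idem H \<star> l) x"
  proof (cases "x \<in> carrier G")
    case x: True
    have "l y * idem H (inv y \<otimes> x) = idem H (x \<otimes> inv y) * l y" if y: "y \<in> carrier G" for y
    proof (cases "y \<in> L")
      case True
      have "inv y \<otimes> x \<in> H \<longleftrightarrow> x \<otimes> inv y \<in> H"
      proof
        assume "inv y \<otimes> x \<in> H"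
        then have "y \<otimes> (inv y \<otimes> x) \<otimes> inv y \<in> H" using normal True by blast
        then show "x \<otimes> inv y \<in> H" using x y by simp
      next
        assume "x \<otimes> inv y \<in> H"
        then have "inv y \<otimes> (x \<otimes> inv y) \<otimes> inv (inv y) \<in> H"
          using normal subgroup.m_inv_closed[OF L True] by blast
        then show "inv y \<otimes> x \<in> H" using x y by (simp add: m_assoc)
      qed
      then show ?thesis by (simp add: idem_def)
    qed (use l in \<open>simp add: group_alg_def\<close>)
    then show ?thesis
      unfolding conv_apply[OF x, of l] conv_apply_right[OF x, of "idem H"] by (rule sum.cong[OF refl])
  qed (simp add: conv_outside)
qed

definition right_ideal :: "('g \<Rightarrow> complex) \<Rightarrow> ('g \<Rightarrow> complex) set" where
  "right_ideal F = {F \<star> x | x. x \<in> group_alg (carrier G)}"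

lemma conv_mem_right_ideal: "x \<in> group_alg (carrier G) \<Longrightarrow> F \<star> x \<in> right_ideal F"
  unfolding right_ideal_def by blast

lemma right_ideal_subset_group_alg: "right_ideal F \<subseteq> group_alg (carrier G)"
  unfolding right_ideal_def using conv_in_group_alg by blast

lemma conv_left_right_ideal:
  assumes "l \<star> F = F \<star> l" "x \<in> right_ideal F"
  shows "l \<star> x \<star> a \<in> right_ideal F"
proof -
  obtain b where "b \<in> group_alg (carrier G)" "x = F \<star> b"
    using assms(2) unfolding right_ideal_def by blast
  then have "l \<star> x \<star> a = F \<star> (l \<star> b \<star> a)"
    using assms(1) by (metis conv_assoc)
  then show ?thesis using conv_in_group_alg conv_mem_right_ideal by metis
qed

lemma linear_conv: "Vector_Spaces.linear (\<lambda>c f x. c * f x) (\<lambda>c f x. c * f x) (conv (carrier G) F)"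
  using vector_space_pointwise_scale
  by (auto simp: Vector_Spaces.linear_iff plus_fun_def conv_add_right conv_scale_right)

lemma subspace_right_ideal: "module.subspace (\<lambda>c f x. c * f x) (right_ideal F)"
proof -
  interpret Vector_Spaces.linear "\<lambda>(c::complex) f (x::'g). c * f x" "\<lambda>(c::complex) f (x::'g). c * f x"
    "conv (carrier G) F" by (rule linear_conv)
  have "right_ideal F = conv (carrier G) F ` group_alg (carrier G)"
    unfolding right_ideal_def by blast
  moreover have "vs1.subspace (group_alg (carrier G))"
    by (auto simp: vs1.subspace_def group_alg_def)
  ultimately show ?thesis
    using subspace_image by metis
qed

lemma right_ideal_subset_span:
  "right_ideal F \<subseteq> module.span (\<lambda>c f x. c * f x) ((\<lambda>g x. if x = g then 1 else 0) ` carrier G)"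
proof
  interpret vector_space "\<lambda>(c::complex) f (x::'g). c * f x" by (rule vector_space_pointwise_scale)
  fix f assume "f \<in> right_ideal F"
  then have "f \<in> group_alg (carrier G)"
    unfolding right_ideal_def using conv_in_group_alg by blast
  then have "f = (\<Sum>g\<in>carrier G. (\<lambda>c f x. c * f x) (f g) (\<lambda>x. if x = g then 1 else 0))"
    using finite_carrier by (auto simp: fun_eq_iff group_alg_def sum_fun_apply if_distrib cong: if_cong)
  also have "\<dots> \<in> span ((\<lambda>g x. if x = g then 1 else 0) ` carrier G)"
    by (intro span_sum span_scale span_base) auto
  finally show "f \<in> span ((\<lambda>g x. if x = g then 1 else 0) ` carrier G)" .
qed

lemma bij_betw_conv_right_ideals:
  assumes AF: "\<And>x. x \<in> right_ideal F \<Longrightarrow> A \<star> x \<in> right_ideal F'"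
    and A0: "\<And>x. x \<in> right_ideal F \<Longrightarrow> A \<star> x = (\<lambda>_. 0) \<Longrightarrow> x = (\<lambda>_. 0)"
    and BF: "\<And>y. y \<in> right_ideal F' \<Longrightarrow> B \<star> y \<in> right_ideal F"
    and B0: "\<And>y. y \<in> right_ideal F' \<Longrightarrow> B \<star> y = (\<lambda>_. 0) \<Longrightarrow> y = (\<lambda>_. 0)"
  shows "bij_betw (conv (carrier G) A) (right_ideal F) (right_ideal F')"
proof -
  interpret vector_space "\<lambda>(c::complex) f (x::'g). c * f x" by (rule vector_space_pointwise_scale)
  have inj: "inj_on (conv (carrier G) C) (right_ideal E)"
    if "\<And>x. x \<in> right_ideal E \<Longrightarrow> C \<star> x = (\<lambda>_. 0) \<Longrightarrow> x = (\<lambda>_. 0)" for C E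
  proof -
    interpret Vector_Spaces.linear "\<lambda>(c::complex) f (x::'g). c * f x" "\<lambda>(c::complex) f (x::'g). c * f x"
      "conv (carrier G) C" by (rule linear_conv)
    show ?thesis using inj_on_iff_eq_0[OF subspace_right_ideal] that by (simp add: zero_fun_def)
  qed
  have "conv (carrier G) A ` right_ideal F = right_ideal F'"
    by (rule image_eq_if_injective_linear_maps[OF finite_imageI[OF finite_carrier]
          right_ideal_subset_span right_ideal_subset_span subspace_right_ideal subspace_right_ideal
          linear_conv inj[OF A0] _ linear_conv inj[OF B0]]) (use AF BF in blast)+
  then show ?thesis using inj[OF A0] by (simp add: bij_betw_def)
qed

end

section \<open>Factorised pairs of subgroups\<close>

text \<open>U, V stand for the upper and lower unitriangular groups and U', V' for their conjugates
  U^w, V^w; each of the four is the product of its intersections with the other pair.\<close>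
locale factorising_subgroups = finite_group_algebra G for G :: "'g::times monoid" (structure) +
  fixes U V U' V' :: "'g set"
  assumes subgroups: "subgroup U G" "subgroup V G" "subgroup U' G" "subgroup V' G"
    and factor_U': "idem (U' \<inter> V) \<star> idem (U' \<inter> U) = idem U'"
    and factor_V': "idem (V' \<inter> U) \<star> idem (V' \<inter> V) = idem V'"
    and factor_U: "idem (U' \<inter> U) \<star> idem (V' \<inter> U) = idem U"
    and factor_V: "idem (V' \<inter> V) \<star> idem (U' \<inter> V) = idem V"
begin

lemma subgroups_Int:
  "subgroup (U' \<inter> U) G" "subgroup (U' \<inter> V) G" "subgroup (V' \<inter> U) G" "subgroup (V' \<inter> V) G"
  using subgroups by (simp_all add: subgroups_Inter_pair)

lemma idem_V_conv_idem_U'_V':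
  "idem V \<star> (idem U' \<star> idem V' \<star> a) = idem V \<star> idem U \<star> (idem (V' \<inter> V) \<star> a)"
proof -
  have "idem V \<star> (idem U' \<star> idem V' \<star> a)
      = idem V \<star> (idem (U' \<inter> V) \<star> (idem (U' \<inter> U) \<star> (idem V' \<star> a)))"
    by (simp add: conv_assoc conv_conv_eq[OF factor_U'])
  also have "\<dots> = idem V \<star> (idem (U' \<inter> U) \<star> (idem V' \<star> a))"
    using subgroups subgroups_Int by (simp add: idem_absorb_inner)
  also have "\<dots> = idem V \<star> (idem U \<star> (idem (V' \<inter> V) \<star> a))"
    by (simp add: conv_conv_eq[OF factor_V', symmetric] conv_conv_eq[OF factor_U])
  finally show ?thesis by (simp add: conv_assoc)
qed

lemma idem_V_kernel:
  assumes "idem V \<star> (idem U' \<star> (idem V' \<star> a)) = (\<lambda>_. 0)"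
  shows "idem U' \<star> (idem V' \<star> a) = (\<lambda>_. 0)"
proof (rule idem_conv_kernel[OF subgroups(3,4)])
  let ?z = "idem U' \<star> (idem V' \<star> a)"
  have "idem (V' \<inter> V) \<star> ?z = idem (V' \<inter> V) \<star> (idem (U' \<inter> V) \<star> ?z)"
    using subgroups subgroups_Int by (simp add: idem_absorb_outer)
  also have "\<dots> = idem V \<star> ?z"
    by (rule conv_conv_eq[OF factor_V])
  finally have "idem (V' \<inter> V) \<star> ?z = (\<lambda>_. 0)" using assms by simp
  then have "idem V' \<star> (idem (V' \<inter> V) \<star> ?z) = (\<lambda>_. 0)" by (simp add: conv_zero_right)
  then show "idem V' \<star> ?z = (\<lambda>_. 0)"
    using subgroups subgroups_Int by (simp add: idem_absorb_inner)
qed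

lemma idem_U'_V'_kernel:
  assumes "idem U' \<star> (idem V' \<star> (idem V \<star> (idem U \<star> b))) = (\<lambda>_. 0)"
  shows "idem V \<star> (idem U \<star> b) = (\<lambda>_. 0)"
proof -
  let ?y = "idem V \<star> (idem U \<star> b)"
  have "idem V' \<star> ?y = idem (V' \<inter> U) \<star> (idem (V' \<inter> V) \<star> ?y)"
    by (rule conv_conv_eq[OF factor_V', symmetric])
  also have "\<dots> = idem (V' \<inter> U) \<star> ?y"
    using subgroups subgroups_Int by (simp add: idem_absorb_outer)
  finally have "idem U' \<star> (idem (V' \<inter> U) \<star> ?y) = (\<lambda>_. 0)" using assms by simp
  then have "idem (U' \<inter> V) \<star> (idem U \<star> ?y) = (\<lambda>_. 0)"
    by (simp add: conv_conv_eq[OF factor_U', symmetric] conv_conv_eq[OF factor_U])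
  then have "idem V \<star> (idem (U' \<inter> V) \<star> (idem U \<star> ?y)) = (\<lambda>_. 0)"
    by (simp add: conv_zero_right)
  then have "idem V \<star> (idem U \<star> (idem V \<star> (idem U \<star> b))) = (\<lambda>_. 0)"
    using subgroups subgroups_Int by (simp add: idem_absorb_inner)
  then have "idem U \<star> (idem V \<star> (idem U \<star> b)) = (\<lambda>_. 0)"
    by (rule idem_conv_kernel[OF subgroups(1,2)])
  then show ?thesis
    by (rule idem_conv_kernel[OF subgroups(2,1)])
qed

theorem bij_betw_idem_V_conv:
  "bij_betw (conv (carrier G) (idem V)) (right_ideal (idem U' \<star> idem V')) (right_ideal (idem V \<star> idem U))"
proof (rule bij_betw_conv_right_ideals)
  fix x assume "x \<in> right_ideal (idem U' \<star> idem V')"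
  then obtain a where a: "x = idem U' \<star> idem V' \<star> a"
    unfolding right_ideal_def by blast
  show "idem V \<star> x \<in> right_ideal (idem V \<star> idem U)"
    unfolding a idem_V_conv_idem_U'_V' by (rule conv_mem_right_ideal[OF conv_in_group_alg])
  show "x = (\<lambda>_. 0)" if "idem V \<star> x = (\<lambda>_. 0)"
    using idem_V_kernel that unfolding a by (simp add: conv_assoc)
next
  fix y assume y: "y \<in> right_ideal (idem V \<star> idem U)"
  then show "idem U' \<star> idem V' \<star> y \<in> right_ideal (idem U' \<star> idem V')"
    using right_ideal_subset_group_alg by (blast intro: conv_mem_right_ideal)
  obtain b where b: "y = idem V \<star> idem U \<star> b"
    using y unfolding right_ideal_def by blast
  show "y = (\<lambda>_. 0)" if "idem U' \<star> idem V' \<star> y = (\<lambda>_. 0)"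
    using idem_U'_V'_kernel that unfolding b by (simp add: conv_assoc)
qed

lemma idem_V_conv_equivariant:
  assumes L: "subgroup L G" and l: "l \<in> group_alg L"
    and normal: "\<And>H d h. H \<in> {V, U', V'} \<Longrightarrow> d \<in> L \<Longrightarrow> h \<in> H \<Longrightarrow> d \<otimes> h \<otimes> inv d \<in> H"
    and x: "x \<in> right_ideal (idem U' \<star> idem V')"
  shows "l \<star> x \<star> a \<in> right_ideal (idem U' \<star> idem V')"
    and "idem V \<star> (l \<star> x \<star> a) = l \<star> (idem V \<star> x) \<star> a"
proof -
  have commute: "l \<star> idem H = idem H \<star> l" if "H \<in> {V, U', V'}" for H
    using conv_idem_commute[OF L _ l normal[OF that]] subgroups that by auto
  then have "l \<star> (idem U' \<star> idem V') = idem U' \<star> idem V' \<star> l"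
    by (metis conv_assoc insert_iff)
  then show "l \<star> x \<star> a \<in> right_ideal (idem U' \<star> idem V')"
    using conv_left_right_ideal x by blast
  show "idem V \<star> (l \<star> x \<star> a) = l \<star> (idem V \<star> x) \<star> a"
    using commute[of V] by (metis conv_assoc insertI1)
qed

end

section \<open>The general linear group\<close>

lemma index_mult_mat_sum:
  assumes "A \<in> carrier_mat n n" "B \<in> carrier_mat n n" "i < n" "j < n"
  shows "(A * B) $$ (i, j) = (\<Sum>k<n. A $$ (i, k) * B $$ (k, j))"
  using assms by (auto simp: scalar_prod_def atLeast0LessThan intro!: sum.cong)

lemma finite_carrier_mat: "finite (carrier_mat n m :: 'a::finite mat set)"
proof -
  let ?I = "{..<n} \<times> {..<m}"
  have "carrier_mat n m \<subseteq> (\<lambda>f. mat n m f) ` (?I \<rightarrow>\<^sub>E (UNIV :: 'a set))"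
  proof
    fix A :: "'a mat" assume A: "A \<in> carrier_mat n m"
    have "A = mat n m (restrict (\<lambda>p. A $$ p) ?I)"
      by (rule eq_matI) (use A in auto)
    moreover have "restrict (\<lambda>p. A $$ p) ?I \<in> ?I \<rightarrow>\<^sub>E UNIV" by simp
    ultimately show "A \<in> (\<lambda>f. mat n m f) ` (?I \<rightarrow>\<^sub>E UNIV)" by blast
  qed
  moreover have "finite (?I \<rightarrow>\<^sub>E (UNIV :: 'a set))" by (rule finite_PiE) auto
  ultimately show ?thesis using finite_subset by blast
qed

lemma inverts_mat_carrier:
  assumes "A \<in> carrier_mat n n" "inverts_mat A B" "inverts_mat B A"
  shows "B \<in> carrier_mat n n"
proof -
  have "dim_col B = n" using arg_cong[OF assms(2)[unfolded inverts_mat_def], of dim_col] assms(1) by simp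
  moreover have "dim_row B = n"
    using arg_cong[OF assms(3)[unfolded inverts_mat_def], of dim_col] assms(1) by simp
  ultimately show ?thesis by auto
qed

definition GL_group :: "nat \<Rightarrow> 'a::comm_ring_1 mat monoid" where
  "GL_group n = units_of (ring_mat TYPE('a) n ())"

lemma Units_ring_mat: "Units (ring_mat TYPE('a::comm_ring_1) n b) = GL n"
proof (intro equalityI subsetI)
  fix A :: "'a mat" assume "A \<in> Units (ring_mat TYPE('a) n b)"
  then obtain B where carr: "A \<in> carrier_mat n n" "B \<in> carrier_mat n n"
    and inv: "B * A = 1\<^sub>m n" "A * B = 1\<^sub>m n"
    unfolding Units_def ring_mat_simps by blast
  then have "inverts_mat A B" "inverts_mat B A"
    by (simp_all add: inverts_mat_def)
  moreover have "square_mat A" using carr(1) by simp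
  ultimately show "A \<in> GL n"
    using carr(1) unfolding GL_def invertible_mat_def by blast
next
  fix A :: "'a mat" assume "A \<in> GL n"
  then obtain B where A: "A \<in> carrier_mat n n" and B: "inverts_mat A B" "inverts_mat B A"
    unfolding GL_def invertible_mat_def by blast
  have "B \<in> carrier_mat n n" using inverts_mat_carrier[OF A B] .
  moreover have "B * A = 1\<^sub>m n" "A * B = 1\<^sub>m n"
    using A B \<open>B \<in> carrier_mat n n\<close> by (simp_all add: inverts_mat_def)
  ultimately show "A \<in> Units (ring_mat TYPE('a) n b)"
    unfolding Units_def ring_mat_simps using A by blast
qed

lemma in_GL_if_inverse:
  assumes "A \<in> carrier_mat n n" "B \<in> carrier_mat n n" "A * B = 1\<^sub>m n" "B * A = 1\<^sub>m n"
  shows "A \<in> GL n"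
  using assms Units_ring_mat[of n "()"] unfolding Units_def ring_mat_simps by blast

lemma GL_group_simps [simp]:
  "carrier (GL_group n) = GL n" "mult (GL_group n) = (*)" "one (GL_group n) = 1\<^sub>m n"
  by (simp_all add: GL_group_def units_of_def Units_ring_mat ring_mat_simps)

lemma group_GL_group: "group (GL_group n)"
  unfolding GL_group_def using ring.is_monoid[OF ring_mat] by (rule monoid.units_group)

lemma finite_group_algebra_GL_group:
  "finite_group_algebra (GL_group n :: 'a::{comm_ring_1, finite} mat monoid)"
proof -
  have "finite (GL n :: 'a mat set)"
    using finite_carrier_mat by (rule finite_subset[rotated]) (auto simp: GL_def)
  then show ?thesis
    by (intro finite_group_algebra.intro finite_group_algebra_axioms.intro group_GL_group) simp_all
qed

lemma minv_eq_inv: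
  assumes A: "A \<in> GL n"
  shows "minv A = inv\<^bsub>GL_group n\<^esub> A"
proof -
  have A_carr: "A \<in> carrier_mat n n" using A by (simp add: GL_def)
  have "\<exists>B. inverts_mat A B \<and> inverts_mat B A" using A by (simp add: GL_def invertible_mat_def)
  then have "inverts_mat A (minv A) \<and> inverts_mat (minv A) A"
    unfolding minv_def by (rule someI_ex)
  then have inverts: "inverts_mat A (minv A)" "inverts_mat (minv A) A" by blast+
  have carr: "minv A \<in> carrier_mat n n" using inverts_mat_carrier[OF A_carr inverts] .
  have "inv\<^bsub>GL_group n\<^esub> A = minv A"
  proof (rule group.inv_equality[OF group_GL_group])
    show "minv A \<otimes>\<^bsub>GL_group n\<^esub> A = \<one>\<^bsub>GL_group n\<^esub>"
      using inverts(2) carr by (simp add: inverts_mat_def)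
    show "minv A \<in> carrier (GL_group n)"
      using inverts carr by (auto simp: GL_def invertible_mat_def)
  qed (use A in simp)
  then show ?thesis by simp
qed

section \<open>Pattern groups\<close>

text \<open>U, V, U^w and V^w are pattern_mats n P for P i j given by i < j, j < i,
  \<sigma> i < \<sigma> j and \<sigma> j < \<sigma> i respectively.\<close>
definition pattern_mats :: "nat \<Rightarrow> (nat \<Rightarrow> nat \<Rightarrow> bool) \<Rightarrow> 'a::comm_ring_1 mat set" where
  "pattern_mats n P = {A \<in> carrier_mat n n. (\<forall>i<n. A $$ (i, i) = 1)
     \<and> (\<forall>i<n. \<forall>j<n. i \<noteq> j \<longrightarrow> \<not> P i j \<longrightarrow> A $$ (i, j) = 0)}"

lemma pattern_matsD:
  assumes "A \<in> pattern_mats n P"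
  shows "A \<in> carrier_mat n n" "i < n \<Longrightarrow> A $$ (i, i) = 1"
    "i < n \<Longrightarrow> j < n \<Longrightarrow> i \<noteq> j \<Longrightarrow> \<not> P i j \<Longrightarrow> A $$ (i, j) = 0"
  using assms unfolding pattern_mats_def by auto

lemma pattern_mats_Int: "pattern_mats n P \<inter> pattern_mats n Q = pattern_mats n (\<lambda>i j. P i j \<and> Q i j)"
  unfolding pattern_mats_def by auto

lemma one_mem_pattern_mats: "1\<^sub>m n \<in> pattern_mats n P"
  unfolding pattern_mats_def by simp

lemma pattern_mats_product_term:
  assumes "transp P" "asymp P" "A \<in> pattern_mats n P" "B \<in> pattern_mats n P"
    and "i < n" "j < n" "k < n" "\<not> P i j" "k \<noteq> i \<or> k \<noteq> j"
  shows "A $$ (i, k) * B $$ (k, j) = 0"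
proof (cases "k = i")
  case True
  then have "i \<noteq> j" using assms(9) by simp
  then show ?thesis using True pattern_matsD(3)[OF assms(4)] assms(5,6,8) by simp
next
  case ki: False
  show ?thesis
  proof (cases "k = j")
    case True
    then show ?thesis using ki pattern_matsD(3)[OF assms(3)] assms(5,6,8) by simp
  next
    case False
    have "\<not> P i k \<or> \<not> P k j" using assms(1,8) transpD by metis
    then show ?thesis
      using ki False pattern_matsD(3)[OF assms(3)] pattern_matsD(3)[OF assms(4)] assms(5-7) by auto
  qed
qed

lemma mult_mem_pattern_mats:
  assumes P: "transp P" "asymp P" and A: "A \<in> pattern_mats n P" and B: "B \<in> pattern_mats n P"
  shows "A * B \<in> pattern_mats n P"
proof -
  have carr: "A \<in> carrier_mat n n" "B \<in> carrier_mat n n" using A B by (simp_all add: pattern_matsD)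
  have entry: "(A * B) $$ (i, j) = (if i = j then 1 else 0)" if "i < n" "j < n" "\<not> P i j" for i j
  proof -
    have "(A * B) $$ (i, j) = (\<Sum>k<n. if i = j \<and> k = i then A $$ (i, k) * B $$ (k, j) else 0)"
      unfolding index_mult_mat_sum[OF carr that(1,2)]
      using pattern_mats_product_term[OF P A B that(1,2) _ that(3)] by (intro sum.cong) auto
    also have "\<dots> = (if i = j then 1 else 0)"
      using that pattern_matsD(2)[OF A] pattern_matsD(2)[OF B] by simp
    finally show ?thesis .
  qed
  have "\<not> P i i" for i using asympD[OF P(2)] by blast
  then show ?thesis
    unfolding pattern_mats_def using carr entry by auto
qed

definition pattern_positions :: "nat \<Rightarrow> (nat \<Rightarrow> nat \<Rightarrow> bool) \<Rightarrow> (nat \<times> nat) set" where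
  "pattern_positions n P = {(i, j). i < n \<and> j < n \<and> i \<noteq> j \<and> P i j}"

lemma finite_pattern_positions: "finite (pattern_positions n P)"
  by (rule finite_subset[of _ "{..<n} \<times> {..<n}"]) (auto simp: pattern_positions_def)

lemma card_pattern_mats:
  "card (pattern_mats n P :: 'a::{comm_ring_1, finite} mat set)
     = card (UNIV :: 'a set) ^ card (pattern_positions n P)"
proof -
  let ?I = "pattern_positions n P"
  define M :: "(nat \<times> nat \<Rightarrow> 'a) \<Rightarrow> 'a mat" where
    "M f = mat n n (\<lambda>(i, j). if i = j then 1 else if (i, j) \<in> ?I then f (i, j) else 0)" for f
  have "bij_betw M (?I \<rightarrow>\<^sub>E UNIV) (pattern_mats n P)"
  proof (rule bij_betw_imageI)
    show "inj_on M (?I \<rightarrow>\<^sub>E UNIV)"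
    proof (rule inj_onI)
      fix f g assume f: "f \<in> ?I \<rightarrow>\<^sub>E UNIV" and g: "g \<in> ?I \<rightarrow>\<^sub>E UNIV" and "M f = M g"
      show "f = g"
      proof (rule PiE_ext[OF f g])
        fix p assume p: "p \<in> ?I"
        then obtain i j where ij: "p = (i, j)" "i < n" "j < n" "i \<noteq> j"
          by (auto simp: pattern_positions_def)
        have "M f $$ (i, j) = M g $$ (i, j)" using \<open>M f = M g\<close> by simp
        then show "f p = g p" using ij p by (simp add: M_def)
      qed
    qed
    have "A \<in> M ` (?I \<rightarrow>\<^sub>E UNIV)" if A: "A \<in> pattern_mats n P" for A
    proof -
      have "A = M (restrict (\<lambda>p. A $$ p) ?I)"
        by (rule eq_matI) (use pattern_matsD[OF A] in \<open>auto simp: M_def pattern_positions_def\<close>)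
      moreover have "restrict (\<lambda>p. A $$ p) ?I \<in> ?I \<rightarrow>\<^sub>E UNIV" by simp
      ultimately show ?thesis by (rule image_eqI)
    qed
    moreover have "M f \<in> pattern_mats n P" for f
      unfolding pattern_mats_def M_def pattern_positions_def by simp
    ultimately show "M ` (?I \<rightarrow>\<^sub>E UNIV) = pattern_mats n P" by blast
  qed
  then have "card (pattern_mats n P :: 'a mat set) = card (?I \<rightarrow>\<^sub>E (UNIV :: 'a set))"
    by (simp add: bij_betw_same_card)
  also have "\<dots> = card (UNIV :: 'a set) ^ card ?I"
    by (simp add: card_PiE finite_pattern_positions)
  finally show ?thesis .
qed

lemma unitriangular_in_GL:
  fixes A :: "'a::comm_ring_1 mat"
  assumes "A \<in> pattern_mats n (\<lambda>i j. i < j) \<or> A \<in> pattern_mats n (\<lambda>i j. j < i)"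
  shows "A \<in> GL n"
proof -
  have carr: "A \<in> carrier_mat n n" and diag: "\<And>i. i < n \<Longrightarrow> A $$ (i, i) = 1"
    using assms pattern_matsD by blast+
  have "dim_row A = n" using carr by simp
  then have "prod_list (diag_mat A) = 1"
    unfolding prod_list_diag_prod using diag by (intro prod.neutral) simp
  moreover have "det A = prod_list (diag_mat A)"
    using assms
  proof
    assume "A \<in> pattern_mats n (\<lambda>i j. i < j)"
    then have "upper_triangular A"
      using carr pattern_matsD(3) by (fastforce simp: upper_triangular_def)
    then show ?thesis by (rule det_upper_triangular[OF _ carr])
  next
    assume lower: "A \<in> pattern_mats n (\<lambda>i j. j < i)"
    have "A $$ (i, j) = 0" if "i < j" "j < n" for i j
      using pattern_matsD(3)[OF lower, of i j] that by simp
    then show ?thesis by (rule det_lower_triangular[OF _ carr])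
  qed
  moreover have "(1::'a) \<cdot>\<^sub>m 1\<^sub>m n = 1\<^sub>m n" by (rule eq_matI) simp_all
  ultimately have "A * adj_mat A = 1\<^sub>m n" "adj_mat A * A = 1\<^sub>m n"
    using adj_mat[OF carr] by simp_all
  then show ?thesis
    using adj_mat(1)[OF carr] carr by (intro in_GL_if_inverse) simp_all
qed

lemma upper_uni_eq: "upper_uni n = (pattern_mats n (\<lambda>i j. i < j) :: 'a::comm_ring_1 mat set)"
proof
  show "upper_uni n \<subseteq> (pattern_mats n (\<lambda>i j. i < j) :: 'a mat set)"
    unfolding upper_uni_def pattern_mats_def GL_def by auto
  show "(pattern_mats n (\<lambda>i j. i < j) :: 'a mat set) \<subseteq> upper_uni n"
  proof
    fix A :: "'a mat" assume A: "A \<in> pattern_mats n (\<lambda>i j. i < j)"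
    then have "A \<in> GL n"
      using unitriangular_in_GL by blast
    then show "A \<in> upper_uni n"
      using pattern_matsD[OF A] unfolding upper_uni_def by auto
  qed
qed

lemma lower_uni_eq: "lower_uni n = (pattern_mats n (\<lambda>i j. j < i) :: 'a::comm_ring_1 mat set)"
proof
  show "lower_uni n \<subseteq> (pattern_mats n (\<lambda>i j. j < i) :: 'a mat set)"
    unfolding lower_uni_def pattern_mats_def GL_def by auto
  show "(pattern_mats n (\<lambda>i j. j < i) :: 'a mat set) \<subseteq> lower_uni n"
  proof
    fix A :: "'a mat" assume A: "A \<in> pattern_mats n (\<lambda>i j. j < i)"
    then have "A \<in> GL n"
      using unitriangular_in_GL by blast
    then show "A \<in> lower_uni n"
      using pattern_matsD[OF A] unfolding lower_uni_def by auto
  qed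
qed

lemma subgroup_pattern_mats:
  assumes "transp P" "asymp P" "pattern_mats n P \<subseteq> (GL n :: 'a::{comm_ring_1, finite} mat set)"
  shows "subgroup (pattern_mats n P) (GL_group n :: 'a::{comm_ring_1, finite} mat monoid)"
proof (rule group.finite_subgroupI[OF group_GL_group])
  show "finite (pattern_mats n P :: 'a mat set)"
    by (rule finite_subset[OF _ finite_carrier_mat]) (auto simp: pattern_mats_def)
qed (use assms in \<open>simp_all add: one_mem_pattern_mats mult_mem_pattern_mats\<close>)

lemma conj_grp_subset_GL:
  fixes w :: "'a::comm_ring_1 mat"
  assumes "w \<in> GL n" "H \<subseteq> GL n"
  shows "conj_grp w H \<subseteq> GL n"
proof -
  interpret GL: Group.group "GL_group n :: 'a::comm_ring_1 mat monoid" by (rule group_GL_group)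
  have closed: "x * y \<in> GL n" if "x \<in> GL n" "y \<in> GL n" for x y :: "'a mat"
    using GL.m_closed[of x y] that by simp
  have "minv w \<in> GL n" using GL.inv_closed[of w] assms(1) minv_eq_inv[OF assms(1)] by simp
  then show ?thesis using assms closed unfolding conj_grp_def by blast
qed

section \<open>Permutation and diagonal matrices\<close>

definition perm_mat :: "(nat \<Rightarrow> nat) \<Rightarrow> nat \<Rightarrow> 'a::comm_ring_1 mat" where
  "perm_mat \<sigma> n = mat n n (\<lambda>(i, j). if i = \<sigma> j then 1 else 0)"

lemma perm_mat_carrier [simp]: "perm_mat \<sigma> n \<in> carrier_mat n n"
  and dim_perm_mat [simp]: "dim_row (perm_mat \<sigma> n) = n" "dim_col (perm_mat \<sigma> n) = n"
  by (simp_all add: perm_mat_def)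

lemma mult_perm_mat_index:
  assumes "\<sigma> permutes {..<n}" "h \<in> carrier_mat n n" "i < n" "j < n"
  shows "(h * perm_mat \<sigma> n) $$ (i, j) = h $$ (i, \<sigma> j)"
proof -
  have "\<sigma> j < n" using permutes_in_image[OF assms(1)] assms(4) by simp
  have "(h * perm_mat \<sigma> n) $$ (i, j) = (\<Sum>k<n. if k = \<sigma> j then h $$ (i, k) else 0)"
    unfolding index_mult_mat_sum[OF assms(2) perm_mat_carrier assms(3,4)]
    using assms(4) by (intro sum.cong) (auto simp: perm_mat_def)
  with \<open>\<sigma> j < n\<close> show ?thesis by simp
qed

lemma perm_mat_mult_index:
  assumes "\<sigma> permutes {..<n}" "h \<in> carrier_mat n n" "i < n" "j < n"
  shows "(perm_mat \<sigma> n * h) $$ (i, j) = h $$ (Hilbert_Choice.inv \<sigma> i, j)"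
proof -
  have "Hilbert_Choice.inv \<sigma> i < n" using permutes_in_image[OF permutes_inv[OF assms(1)]] assms(3) by simp
  moreover have "i = \<sigma> k \<longleftrightarrow> k = Hilbert_Choice.inv \<sigma> i" for k
    using permutes_inv_eq[OF assms(1)] by metis
  moreover have "(perm_mat \<sigma> n * h) $$ (i, j) = (\<Sum>k<n. if k = Hilbert_Choice.inv \<sigma> i then h $$ (k, j) else 0)"
    unfolding index_mult_mat_sum[OF perm_mat_carrier assms(2,3,4)]
    using assms(3) calculation(2) by (intro sum.cong) (auto simp: perm_mat_def)
  ultimately show ?thesis by simp
qed

lemma perm_mat_mult:
  assumes "\<sigma> permutes {..<n}" "\<tau> permutes {..<n}"
  shows "perm_mat \<sigma> n * perm_mat \<tau> n = (perm_mat (\<sigma> \<circ> \<tau>) n :: 'a::comm_ring_1 mat)"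
proof (rule eq_matI)
  fix i j assume "i < dim_row (perm_mat (\<sigma> \<circ> \<tau>) n :: 'a mat)" "j < dim_col (perm_mat (\<sigma> \<circ> \<tau>) n :: 'a mat)"
  then have ij: "i < n" "j < n" by (simp_all add: perm_mat_def)
  have "Hilbert_Choice.inv \<sigma> i = \<tau> j \<longleftrightarrow> i = \<sigma> (\<tau> j)"
    using permutes_inv_eq[OF assms(1)] by metis
  then show "(perm_mat \<sigma> n * perm_mat \<tau> n) $$ (i, j) = (perm_mat (\<sigma> \<circ> \<tau>) n :: 'a mat) $$ (i, j)"
    using ij permutes_in_image[OF permutes_inv[OF assms(1)], of i]
    unfolding perm_mat_mult_index[OF assms(1) perm_mat_carrier ij] by (simp add: perm_mat_def)
qed (simp_all add: perm_mat_def)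

lemma perm_mat_id: "perm_mat id n = 1\<^sub>m n"
  by (rule eq_matI) (simp_all add: perm_mat_def)

lemma perm_mat_in_GL:
  assumes "\<sigma> permutes {..<n}"
  shows "perm_mat \<sigma> n \<in> GL n"
  using assms permutes_inv[OF assms]
  by (intro in_GL_if_inverse[OF perm_mat_carrier perm_mat_carrier[of "Hilbert_Choice.inv \<sigma>"]])
    (simp_all add: perm_mat_mult permutes_inv_o perm_mat_id)

lemma minv_perm_mat:
  assumes "\<sigma> permutes {..<n}"
  shows "minv (perm_mat \<sigma> n) = (perm_mat (Hilbert_Choice.inv \<sigma>) n :: 'a::comm_ring_1 mat)"
proof -
  have "minv (perm_mat \<sigma> n :: 'a mat) = inv\<^bsub>GL_group n\<^esub> (perm_mat \<sigma> n)"
    by (rule minv_eq_inv[OF perm_mat_in_GL[OF assms]])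
  also have "\<dots> = perm_mat (Hilbert_Choice.inv \<sigma>) n"
    using assms permutes_inv[OF assms]
    by (intro group.inv_equality[OF group_GL_group])
      (simp_all add: perm_mat_in_GL perm_mat_mult permutes_inv_o perm_mat_id)
  finally show ?thesis .
qed

lemma conj_perm_mat_index:
  assumes \<sigma>: "\<sigma> permutes {..<n}" and h: "h \<in> carrier_mat n n" and ij: "i < n" "j < n"
  shows "(minv (perm_mat \<sigma> n) * h * perm_mat \<sigma> n) $$ (i, j) = h $$ (\<sigma> i, \<sigma> j)"
proof -
  have "\<sigma> j < n" using permutes_in_image[OF \<sigma>] ij(2) by simp
  have "(minv (perm_mat \<sigma> n) * h * perm_mat \<sigma> n) $$ (i, j) = (perm_mat (Hilbert_Choice.inv \<sigma>) n * h) $$ (i, \<sigma> j)"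
    unfolding minv_perm_mat[OF \<sigma>] using mult_carrier_mat[OF perm_mat_carrier h] ij
    by (rule mult_perm_mat_index[OF \<sigma>])
  also have "\<dots> = h $$ (\<sigma> i, \<sigma> j)"
    using perm_mat_mult_index[OF permutes_inv[OF \<sigma>] h ij(1) \<open>\<sigma> j < n\<close>]
    by (simp add: permutes_inv_inv[OF \<sigma>])
  finally show ?thesis .
qed

lemma conj_grp_perm_mat_pattern_mats:
  assumes \<sigma>: "\<sigma> permutes {..<n}"
  shows "conj_grp (perm_mat \<sigma> n) (pattern_mats n Q) = (pattern_mats n (\<lambda>i j. Q (\<sigma> i) (\<sigma> j)) :: 'a::comm_ring_1 mat set)"
proof (intro equalityI subsetI)
  have \<sigma>_lt: "\<sigma> i < n" if "i < n" for i using permutes_in_image[OF \<sigma>] that by simp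
  have \<sigma>_inj: "\<sigma> i = \<sigma> j \<longleftrightarrow> i = j" for i j using permutes_inj[OF \<sigma>] by (simp add: inj_eq)
  fix g :: "'a mat" 
  {
    assume "g \<in> conj_grp (perm_mat \<sigma> n) (pattern_mats n Q)"
    then obtain h where h: "h \<in> pattern_mats n Q" and g: "g = minv (perm_mat \<sigma> n) * h * perm_mat \<sigma> n"
      unfolding conj_grp_def by blast
    have "g \<in> carrier_mat n n"
      unfolding g using pattern_matsD(1)[OF h] perm_mat_carrier by (metis mult_carrier_mat minv_perm_mat[OF \<sigma>])
    then show "g \<in> pattern_mats n (\<lambda>i j. Q (\<sigma> i) (\<sigma> j))"
      unfolding pattern_mats_def using pattern_matsD[OF h] \<sigma>_lt \<sigma>_inj
      by (simp add: g conj_perm_mat_index[OF \<sigma> pattern_matsD(1)[OF h]])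
  }
  assume g: "g \<in> pattern_mats n (\<lambda>i j. Q (\<sigma> i) (\<sigma> j))"
  define h :: "'a mat" where "h = mat n n (\<lambda>(a, b). g $$ (Hilbert_Choice.inv \<sigma> a, Hilbert_Choice.inv \<sigma> b))"
  have inv_lt: "Hilbert_Choice.inv \<sigma> i < n" if "i < n" for i using permutes_in_image[OF permutes_inv[OF \<sigma>]] that by simp
  have inv_inj: "Hilbert_Choice.inv \<sigma> i = Hilbert_Choice.inv \<sigma> j \<longleftrightarrow> i = j" for i j
    using permutes_inj[OF permutes_inv[OF \<sigma>]] by (simp add: inj_eq)
  have "h \<in> pattern_mats n Q"
    unfolding pattern_mats_def h_def using pattern_matsD[OF g] inv_lt inv_inj
    by (simp add: permutes_inverses(1)[OF \<sigma>])
  moreover have "minv (perm_mat \<sigma> n) * h * perm_mat \<sigma> n = g"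
  proof (rule eq_matI)
    fix i j assume "i < dim_row g" "j < dim_col g"
    then have ij: "i < n" "j < n" using pattern_matsD(1)[OF g] by auto
    have "h \<in> carrier_mat n n" by (simp add: h_def)
    then show "(minv (perm_mat \<sigma> n) * h * perm_mat \<sigma> n) $$ (i, j) = g $$ (i, j)"
      unfolding conj_perm_mat_index[OF \<sigma> \<open>h \<in> carrier_mat n n\<close> ij]
      using ij by (simp add: h_def \<sigma>_lt permutes_inverses(2)[OF \<sigma>])
  qed (use pattern_matsD(1)[OF g] in \<open>simp_all add: minv_perm_mat[OF \<sigma>]\<close>)
  ultimately show "g \<in> conj_grp (perm_mat \<sigma> n) (pattern_mats n Q)"
    unfolding conj_grp_def by blast
qed

lemma diag_grp_mult_index:
  assumes d: "d \<in> diag_grp n" and M: "M \<in> carrier_mat n n" and ij: "i < n" "j < n"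
  shows "(d * M) $$ (i, j) = d $$ (i, i) * M $$ (i, j)"
    and "(M * d) $$ (i, j) = M $$ (i, j) * d $$ (j, j)"
proof -
  have dc: "d \<in> carrier_mat n n" and dz: "\<And>a b. a < n \<Longrightarrow> b < n \<Longrightarrow> a \<noteq> b \<Longrightarrow> d $$ (a, b) = 0"
    using d by (auto simp: diag_grp_def GL_def)
  have "(d * M) $$ (i, j) = (\<Sum>k<n. if k = i then d $$ (i, k) * M $$ (k, j) else 0)"
    unfolding index_mult_mat_sum[OF dc M ij] using ij dz by (intro sum.cong) auto
  then show "(d * M) $$ (i, j) = d $$ (i, i) * M $$ (i, j)" using ij(1) by simp
  have "(M * d) $$ (i, j) = (\<Sum>k<n. if k = j then M $$ (i, k) * d $$ (k, j) else 0)"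
    unfolding index_mult_mat_sum[OF M dc ij] using ij dz by (intro sum.cong) auto
  then show "(M * d) $$ (i, j) = M $$ (i, j) * d $$ (j, j)" using ij(2) by simp
qed

lemma subgroup_diag_grp: "subgroup (diag_grp n) (GL_group n :: 'a::{comm_ring_1, finite} mat monoid)"
proof (rule group.finite_subgroupI[OF group_GL_group])
  interpret GL: Group.group "GL_group n :: 'a mat monoid" by (rule group_GL_group)
  show "finite (diag_grp n :: 'a mat set)"
    by (rule finite_subset[OF _ finite_carrier_mat]) (auto simp: diag_grp_def GL_def)
  show "diag_grp n \<subseteq> carrier (GL_group n :: 'a mat monoid)"
    by (auto simp: diag_grp_def)
  show "\<one>\<^bsub>GL_group n\<^esub> \<in> (diag_grp n :: 'a mat set)"
    using GL.one_closed by (simp add: diag_grp_def)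
  fix x y :: "'a mat" assume x: "x \<in> diag_grp n" and y: "y \<in> diag_grp n"
  have "x * y \<in> GL n" using GL.m_closed[of x y] x y by (simp add: diag_grp_def)
  moreover have "(x * y) $$ (i, j) = 0" if "i < n" "j < n" "i \<noteq> j" for i j
    using diag_grp_mult_index(1)[OF x _ that(1,2), of y] y that by (simp add: diag_grp_def GL_def)
  ultimately show "x \<otimes>\<^bsub>GL_group n\<^esub> y \<in> diag_grp n"
    by (simp add: diag_grp_def)
qed

lemma diag_conj_pattern_mats:
  assumes d: "d \<in> diag_grp n" and h: "h \<in> pattern_mats n Q"
  shows "d \<otimes>\<^bsub>GL_group n\<^esub> h \<otimes>\<^bsub>GL_group n\<^esub> inv\<^bsub>GL_group n\<^esub> d
    \<in> (pattern_mats n Q :: 'a::{comm_ring_1, finite} mat set)"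
proof -
  interpret GL: Group.group "GL_group n :: 'a mat monoid" by (rule group_GL_group)
  let ?e = "inv\<^bsub>GL_group n\<^esub> d"
  have e: "?e \<in> diag_grp n" using subgroup.m_inv_closed[OF subgroup_diag_grp d] .
  have carr: "d \<in> carrier_mat n n" "?e \<in> carrier_mat n n" "h \<in> carrier_mat n n"
    using d e pattern_matsD(1)[OF h] by (auto simp: diag_grp_def GL_def)
  have "d * ?e = 1\<^sub>m n" using GL.r_inv[of d] d by (simp add: diag_grp_def)
  then have unit: "d $$ (i, i) * ?e $$ (i, i) = 1" if "i < n" for i
    using diag_grp_mult_index(1)[OF d carr(2) that that] that by simp
  have entry: "(d * h * ?e) $$ (i, j) = d $$ (i, i) * h $$ (i, j) * ?e $$ (j, j)" if "i < n" "j < n" for i j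
    using diag_grp_mult_index(2)[OF e mult_carrier_mat[OF carr(1,3)] that]
      diag_grp_mult_index(1)[OF d carr(3) that] by simp
  have "d * h * ?e \<in> carrier_mat n n" using carr by simp
  then show ?thesis
    using entry unit pattern_matsD(2,3)[OF h] unfolding pattern_mats_def by (simp add: mult.commute)
qed

lemma pattern_mats_False: "pattern_mats n (\<lambda>_ _. False) = {1\<^sub>m n}"
proof (intro equalityI subsetI)
  fix M assume M: "M \<in> pattern_mats n (\<lambda>_ _. False)"
  have "M = 1\<^sub>m n"
    by (rule eq_matI) (use pattern_matsD[OF M] in auto)
  then show "M \<in> {1\<^sub>m n}" by simp
qed (simp add: one_mem_pattern_mats)

lemma idem_pattern_mats_factor:
  assumes A: "transp A" "asymp A" and B: "transp B" "asymp B"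
    and total: "\<And>i j. i \<noteq> j \<Longrightarrow> B i j \<or> B j i"
    and GL: "pattern_mats n A \<subseteq> (GL n :: 'a::{comm_ring_1, finite} mat set)"
  shows "conv (GL n) (idem (pattern_mats n (\<lambda>i j. A i j \<and> B i j)))
      (idem (pattern_mats n (\<lambda>i j. A i j \<and> B j i))) = (idem (pattern_mats n A) :: 'a mat \<Rightarrow> complex)"
proof -
  interpret finite_group_algebra "GL_group n :: 'a mat monoid" by (rule finite_group_algebra_GL_group)
  let ?H = "pattern_mats n (\<lambda>i j. A i j \<and> B i j) :: 'a mat set"
  let ?K = "pattern_mats n (\<lambda>i j. A i j \<and> B j i) :: 'a mat set"
  have sub: "?H \<subseteq> pattern_mats n A" "?K \<subseteq> pattern_mats n A"
    using pattern_mats_Int[of n A B] pattern_mats_Int[of n A "\<lambda>i j. B j i"] by blast+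
  have "transp (\<lambda>i j. A i j \<and> B i j)" "asymp (\<lambda>i j. A i j \<and> B i j)"
    "transp (\<lambda>i j. A i j \<and> B j i)" "asymp (\<lambda>i j. A i j \<and> B j i)"
    using A B unfolding transp_def asymp_on_def by blast+
  then have subgroups: "subgroup ?H (GL_group n)" "subgroup ?K (GL_group n)"
    using sub GL by (auto intro!: subgroup_pattern_mats)
  have "?H \<inter> ?K = pattern_mats n (\<lambda>_ _. False)"
    unfolding pattern_mats_Int using asympD[OF B(2)] by meson
  then have trivial: "?H \<inter> ?K = {1\<^sub>m n}" by (simp add: pattern_mats_False)
  have "pattern_positions n A
      = pattern_positions n (\<lambda>i j. A i j \<and> B i j) \<union> pattern_positions n (\<lambda>i j. A i j \<and> B j i)"
    "pattern_positions n (\<lambda>i j. A i j \<and> B i j) \<inter> pattern_positions n (\<lambda>i j. A i j \<and> B j i) = {}"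
    using total asympD[OF B(2)] unfolding pattern_positions_def by blast+
  then have card: "card (pattern_mats n A :: 'a mat set) = card ?H * card ?K"
    by (simp add: card_pattern_mats card_Un_disjoint finite_pattern_positions power_add)
  have fin: "finite (pattern_mats n A :: 'a mat set)"
    by (rule finite_subset[OF _ finite_carrier_mat]) (auto simp: pattern_mats_def)
  have one: "?H \<inter> ?K = {\<one>\<^bsub>GL_group n\<^esub>}" by (simp add: trivial)
  have image: "(\<lambda>(h, k). h \<otimes>\<^bsub>GL_group n\<^esub> k) ` (?H \<times> ?K) = pattern_mats n A"
    by (rule mult_image_eq_if_card[OF subgroups subgroup_pattern_mats[OF A GL] fin sub one card])
  show ?thesis
    using idem_conv_idem_product[OF subgroups one image card] by simp
qed

lemma pattern_mats_subset_GL: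
  assumes \<sigma>: "\<sigma> permutes {..<n}"
  shows "(pattern_mats n (\<lambda>i j. i < j) :: 'a::comm_ring_1 mat set) \<subseteq> GL n"
    and "(pattern_mats n (\<lambda>i j. j < i) :: 'a mat set) \<subseteq> GL n"
    and "(pattern_mats n (\<lambda>i j. \<sigma> i < \<sigma> j) :: 'a mat set) \<subseteq> GL n"
    and "(pattern_mats n (\<lambda>i j. \<sigma> j < \<sigma> i) :: 'a mat set) \<subseteq> GL n"
proof -
  show U: "(pattern_mats n (\<lambda>i j. i < j) :: 'a mat set) \<subseteq> GL n"
    and V: "(pattern_mats n (\<lambda>i j. j < i) :: 'a mat set) \<subseteq> GL n"
    unfolding upper_uni_eq[symmetric] lower_uni_eq[symmetric] by (auto simp: upper_uni_def lower_uni_def)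
  show "(pattern_mats n (\<lambda>i j. \<sigma> i < \<sigma> j) :: 'a mat set) \<subseteq> GL n"
    using conj_grp_subset_GL[OF perm_mat_in_GL[OF \<sigma>] U] by (simp add: conj_grp_perm_mat_pattern_mats[OF \<sigma>])
  show "(pattern_mats n (\<lambda>i j. \<sigma> j < \<sigma> i) :: 'a mat set) \<subseteq> GL n"
    using conj_grp_subset_GL[OF perm_mat_in_GL[OF \<sigma>] V] by (simp add: conj_grp_perm_mat_pattern_mats[OF \<sigma>])
qed

lemma factorising_subgroups_GL:
  assumes \<sigma>: "\<sigma> permutes {..<n}"
  shows "factorising_subgroups (GL_group n :: 'a::{comm_ring_1, finite} mat monoid)
    (pattern_mats n (\<lambda>i j. i < j)) (pattern_mats n (\<lambda>i j. j < i))
    (pattern_mats n (\<lambda>i j. \<sigma> i < \<sigma> j)) (pattern_mats n (\<lambda>i j. \<sigma> j < \<sigma> i))"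
proof -
  let ?P = "pattern_mats n :: (nat \<Rightarrow> nat \<Rightarrow> bool) \<Rightarrow> 'a mat set"
  have total: "i < j \<or> j < i" "\<sigma> i < \<sigma> j \<or> \<sigma> j < \<sigma> i" if "i \<noteq> j" for i j :: nat
  proof -
    have "\<sigma> i \<noteq> \<sigma> j" using that permutes_inj[OF \<sigma>] by (simp add: inj_eq)
    then show "i < j \<or> j < i" "\<sigma> i < \<sigma> j \<or> \<sigma> j < \<sigma> i" using that by auto
  qed
  have orders: "transp (\<lambda>i j::nat. i < j)" "asymp (\<lambda>i j::nat. i < j)"
    "transp (\<lambda>i j::nat. j < i)" "asymp (\<lambda>i j::nat. j < i)"
    "transp (\<lambda>i j. \<sigma> i < \<sigma> j)" "asymp (\<lambda>i j. \<sigma> i < \<sigma> j)"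
    "transp (\<lambda>i j. \<sigma> j < \<sigma> i)" "asymp (\<lambda>i j. \<sigma> j < \<sigma> i)"
    unfolding transp_def asymp_on_def by auto
  note GL = pattern_mats_subset_GL[OF \<sigma>, where 'a = 'a]
  have U': "conv (GL n) (idem (?P (\<lambda>i j. \<sigma> i < \<sigma> j \<and> j < i))) (idem (?P (\<lambda>i j. \<sigma> i < \<sigma> j \<and> i < j)))
      = idem (?P (\<lambda>i j. \<sigma> i < \<sigma> j))"
    using total by (intro idem_pattern_mats_factor[OF orders(5,6,3,4) _ GL(3)]) auto
  have V': "conv (GL n) (idem (?P (\<lambda>i j. \<sigma> j < \<sigma> i \<and> i < j))) (idem (?P (\<lambda>i j. \<sigma> j < \<sigma> i \<and> j < i)))
      = idem (?P (\<lambda>i j. \<sigma> j < \<sigma> i))"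
    using total by (intro idem_pattern_mats_factor[OF orders(7,8,1,2) _ GL(4)]) auto
  have U: "conv (GL n) (idem (?P (\<lambda>i j. \<sigma> i < \<sigma> j \<and> i < j))) (idem (?P (\<lambda>i j. \<sigma> j < \<sigma> i \<and> i < j)))
      = idem (?P (\<lambda>i j. i < j))"
    using idem_pattern_mats_factor[OF orders(1,2,5,6) total(2) GL(1)] by (simp add: conj_commute)
  have V: "conv (GL n) (idem (?P (\<lambda>i j. \<sigma> j < \<sigma> i \<and> j < i))) (idem (?P (\<lambda>i j. \<sigma> i < \<sigma> j \<and> j < i)))
      = idem (?P (\<lambda>i j. j < i))"
    using idem_pattern_mats_factor[OF orders(3,4,7,8) _ GL(2)] total(2) by (simp add: conj_commute)
  show ?thesis
  proof (intro factorising_subgroups.intro finite_group_algebra_GL_group factorising_subgroups_axioms.intro)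
    show "subgroup (?P (\<lambda>i j. i < j)) (GL_group n)" "subgroup (?P (\<lambda>i j. j < i)) (GL_group n)"
      "subgroup (?P (\<lambda>i j. \<sigma> i < \<sigma> j)) (GL_group n)" "subgroup (?P (\<lambda>i j. \<sigma> j < \<sigma> i)) (GL_group n)"
      using orders GL by (simp_all add: subgroup_pattern_mats)
  qed (simp_all add: pattern_mats_Int U' V' U V)
qed

theorem lemma3p5:
  fixes n :: nat and w :: "'r::{comm_ring_1, finite} mat"
  assumes "local_ring TYPE('r)"
    and "w \<in> perm_mats n"
  defines "G \<equiv> GL n :: 'r mat set"
  defines "S \<equiv> {conv G (conv G (idem (conj_grp w (upper_uni n))) (idem (conj_grp w (lower_uni n)))) x
                 | x. x \<in> group_alg G}"
  defines "T \<equiv> {conv G (conv G (idem (lower_uni n)) (idem (upper_uni n))) x | x. x \<in> group_alg G}"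
  defines "\<phi> \<equiv> (\<lambda>x. conv G (idem (lower_uni n)) x)"
  shows "(\<forall>x\<in>S. \<phi> x \<in> T)
    \<and> bij_betw \<phi> S T
    \<and> (\<forall>x\<in>S. \<forall>y\<in>S. \<phi> (\<lambda>g. x g + y g) = (\<lambda>g. \<phi> x g + \<phi> y g))
    \<and> (\<forall>c::complex. \<forall>x\<in>S. \<phi> (\<lambda>g. c * x g) = (\<lambda>g. c * \<phi> x g))
    \<and> (\<forall>l\<in>group_alg (diag_grp n). \<forall>x\<in>S. \<forall>a\<in>group_alg G.
          conv G (conv G l x) a \<in> S \<and> \<phi> (conv G (conv G l x) a) = conv G (conv G l (\<phi> x)) a)"
proof -
  obtain \<sigma> where \<sigma>: "\<sigma> permutes {..<n}" and w: "w = perm_mat \<sigma> n"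
    using assms(2) unfolding perm_mats_def perm_mat_def by blast
  let ?P = "pattern_mats n :: (nat \<Rightarrow> nat \<Rightarrow> bool) \<Rightarrow> 'r mat set"
  interpret factorising_subgroups "GL_group n :: 'r mat monoid" "?P (\<lambda>i j. i < j)" "?P (\<lambda>i j. j < i)"
    "?P (\<lambda>i j. \<sigma> i < \<sigma> j)" "?P (\<lambda>i j. \<sigma> j < \<sigma> i)"
    by (rule factorising_subgroups_GL[OF \<sigma>])
  have sets: "upper_uni n = ?P (\<lambda>i j. i < j)" "lower_uni n = ?P (\<lambda>i j. j < i)"
    "conj_grp w (?P (\<lambda>i j. i < j)) = ?P (\<lambda>i j. \<sigma> i < \<sigma> j)"
    "conj_grp w (?P (\<lambda>i j. j < i)) = ?P (\<lambda>i j. \<sigma> j < \<sigma> i)"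
    by (simp_all add: upper_uni_eq lower_uni_eq w conj_grp_perm_mat_pattern_mats[OF \<sigma>])
  have S: "S = right_ideal (conv G (idem (?P (\<lambda>i j. \<sigma> i < \<sigma> j))) (idem (?P (\<lambda>i j. \<sigma> j < \<sigma> i))))"
    and T: "T = right_ideal (conv G (idem (?P (\<lambda>i j. j < i))) (idem (?P (\<lambda>i j. i < j))))"
    unfolding S_def T_def right_ideal_def G_def sets by simp_all
  have \<phi>: "\<phi> = conv G (idem (?P (\<lambda>i j. j < i)))"
    unfolding \<phi>_def sets ..
  have bij: "bij_betw \<phi> S T"
    using bij_betw_idem_V_conv unfolding S T \<phi> G_def by simp
  have normal: "d \<otimes>\<^bsub>GL_group n\<^esub> h \<otimes>\<^bsub>GL_group n\<^esub> inv\<^bsub>GL_group n\<^esub> d \<in> H"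
    if "H \<in> {?P (\<lambda>i j. j < i), ?P (\<lambda>i j. \<sigma> i < \<sigma> j), ?P (\<lambda>i j. \<sigma> j < \<sigma> i)}" "d \<in> diag_grp n" "h \<in> H"
    for H d h
    using that diag_conj_pattern_mats by blast
  have "conv G (conv G l x) a \<in> S \<and> \<phi> (conv G (conv G l x) a) = conv G (conv G l (\<phi> x)) a"
    if "l \<in> group_alg (diag_grp n)" "x \<in> S" for l x a
    using idem_V_conv_equivariant[OF subgroup_diag_grp that(1) normal, of x a] that(2)
    unfolding S \<phi> G_def by simp
  moreover have "\<phi> (\<lambda>g. x g + y g) = (\<lambda>g. \<phi> x g + \<phi> y g)" for x y
    using conv_add_right unfolding \<phi> G_def by simp
  moreover have "\<phi> (\<lambda>g. c * x g) = (\<lambda>g. c * \<phi> x g)" for c x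
    using conv_scale_right unfolding \<phi> G_def by simp
  ultimately show ?thesis
    using bij bij_betwE[OF bij] by blast
qed

end
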